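(* Let $k$ be an algebraically closed field, $\Lambda$ a connected locally bounded $k$-category, and $G$ a group of $k$-linear automorphisms of $\Lambda$ which acts freely on $[\mathrm{ind}\Lambda]$. Let $L$ be a line in $\Lambda$ and $B_L$ its associated $\Lambda$-module. If $B_L$ is weakly-$G$-periodic, then $G_{B_L}\cong\mathbb{Z}$.
   Context: A locally bounded $k$-category: endomorphism algebras local, distinct objects non-isomorphic, and for each object $x$, $\sum_y\dim_k\Lambda(x,y)<\infty$, $\sum_y\dim_k\Lambda(y,x)<\infty$. A $\Lambda$-module is a contravariant $k$-linear functor $\Lambda\to\mathrm{MOD}\,k$; $\mathrm{supp}M$ is the full subcategory of objects $x$ with $M(x)\neq0$. $[\mathrm{ind}\Lambda]$ is the set of isomorphism classes of finite dimensional indecomposable $\Lambda$-modules; for $g\in G$, ${}^gM=M\circ g^{-1}$; $G$ acts freely on $[\mathrm{ind}\Lambda]$ if ${}^gM\not\cong M$ for every indecomposable finite dimensional $M$ and $1\neq g\in G$ (this implies $G$ acts freely on the objects of $\Lambda$). A full subcategory $L$ is convex if each path in the ordinary quiver of $\Lambda$ with source and terminal in $L$ has all its points in $L$. A line is a convex full subcategory isomorphic to the path category of a linear quiver (of type $A_n$, $A_\infty$ or $A_\infty^\infty$). For a line $L$, $B_L$ is the $\Lambda$-module with $B_L(x)=k$ for $x\in L$, $B_L(\alpha)\neq0$ for every nonzero morphism $\alpha$ of $L$, and $B_L(x)=0$ for $x\notin L$. $G_M=\{g\in G\mid {}^gM\cong M\}$. A locally finite dimensional indecomposable $\Lambda$-module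 $Y$ (i.e. $\dim_kY(x)<\infty$ for all $x$) is weakly-$G$-periodic if $\mathrm{supp}Y$ is infinite and $(\mathrm{supp}Y)/G_Y$ is finite. *)

theory Defs
  imports "HOL-Computational_Algebra.Polynomial" "HOL-Algebra.Elementary_Groups"
begin

definition kspace :: "nat \<Rightarrow> (nat \<Rightarrow> 'k::field) set" where
  "kspace n = {v. \<forall>i\<ge>n. v i = 0}"

definition vzero :: "nat \<Rightarrow> 'k::field" where "vzero = (\<lambda>_. 0)"
definition vadd :: "(nat \<Rightarrow> 'k::field) \<Rightarrow> (nat \<Rightarrow> 'k) \<Rightarrow> (nat \<Rightarrow> 'k)" where
  "vadd v w = (\<lambda>i. v i + w i)"
definition vsmult :: "'k::field \<Rightarrow> (nat \<Rightarrow> 'k) \<Rightarrow> (nat \<Rightarrow> 'k)" where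
  "vsmult c v = (\<lambda>i. c * v i)"

definition linear_on :: "nat \<Rightarrow> nat \<Rightarrow> ((nat \<Rightarrow> 'k::field) \<Rightarrow> (nat \<Rightarrow> 'k)) \<Rightarrow> bool" where
  "linear_on n m f \<longleftrightarrow> (\<forall>v\<in>kspace n. f v \<in> kspace m) \<and>
     (\<forall>c. \<forall>v\<in>kspace n. \<forall>w\<in>kspace n. f (vadd (vsmult c v) w) = vadd (vsmult c (f v)) (f w))"

inductive_set kspan :: "(nat \<Rightarrow> 'k::field) set \<Rightarrow> (nat \<Rightarrow> 'k) set" for S where
  span_zero: "vzero \<in> kspan S"
| span_step: "s \<in> S \<Longrightarrow> v \<in> kspan S \<Longrightarrow> vadd (vsmult c s) v \<in> kspan S"

text \<open>Objects are the elements of type 'o. The Hom space from x to y is k^(hdim x y),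
  realised as kspace (hdim x y). kcomp x y z a b is the composite of a : x -> y
  followed by b : y -> z.\<close>

record ('o, 'k) kcat =
  hdim :: "'o \<Rightarrow> 'o \<Rightarrow> nat"
  kid :: "'o \<Rightarrow> nat \<Rightarrow> 'k"
  kcomp :: "'o \<Rightarrow> 'o \<Rightarrow> 'o \<Rightarrow> (nat \<Rightarrow> 'k) \<Rightarrow> (nat \<Rightarrow> 'k) \<Rightarrow> (nat \<Rightarrow> 'k)"

definition hom :: "('o, 'k::field) kcat \<Rightarrow> 'o \<Rightarrow> 'o \<Rightarrow> (nat \<Rightarrow> 'k) set" where
  "hom C x y = kspace (hdim C x y)"

definition k_category :: "('o, 'k::field) kcat \<Rightarrow> bool" where
  "k_category C \<longleftrightarrow>
     (\<forall>x. kid C x \<in> hom C x x) \<and>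
     (\<forall>x y z a b. a \<in> hom C x y \<longrightarrow> b \<in> hom C y z \<longrightarrow> kcomp C x y z a b \<in> hom C x z) \<and>
     (\<forall>x y z a a' b c. a \<in> hom C x y \<longrightarrow> a' \<in> hom C x y \<longrightarrow> b \<in> hom C y z \<longrightarrow>
        kcomp C x y z (vadd (vsmult c a) a') b = vadd (vsmult c (kcomp C x y z a b)) (kcomp C x y z a' b)) \<and>
     (\<forall>x y z a b b' c. a \<in> hom C x y \<longrightarrow> b \<in> hom C y z \<longrightarrow> b' \<in> hom C y z \<longrightarrow>
        kcomp C x y z a (vadd (vsmult c b) b') = vadd (vsmult c (kcomp C x y z a b)) (kcomp C x y z a b')) \<and>
     (\<forall>x y z w a b d. a \<in> hom C x y \<longrightarrow> b \<in> hom C y z \<longrightarrow> d \<in> hom C z w \<longrightarrow>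
        kcomp C x y w a (kcomp C y z w b d) = kcomp C x z w (kcomp C x y z a b) d) \<and>
     (\<forall>x y a. a \<in> hom C x y \<longrightarrow> kcomp C x x y (kid C x) a = a \<and> kcomp C x y y a (kid C y) = a)"

definition is_unit_end :: "('o, 'k::field) kcat \<Rightarrow> 'o \<Rightarrow> (nat \<Rightarrow> 'k) \<Rightarrow> bool" where
  "is_unit_end C x a \<longleftrightarrow> a \<in> hom C x x \<and>
     (\<exists>b\<in>hom C x x. kcomp C x x x a b = kid C x \<and> kcomp C x x x b a = kid C x)"

definition local_end :: "('o, 'k::field) kcat \<Rightarrow> 'o \<Rightarrow> bool" where
  "local_end C x \<longleftrightarrow> kid C x \<noteq> vzero \<and>
     (\<forall>a\<in>hom C x x. \<forall>b\<in>hom C x x. \<not> is_unit_end C x a \<longrightarrow> \<not> is_unit_end C x b \<longrightarrow>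
        \<not> is_unit_end C x (vadd a b))"

definition obj_iso :: "('o, 'k::field) kcat \<Rightarrow> 'o \<Rightarrow> 'o \<Rightarrow> bool" where
  "obj_iso C x y \<longleftrightarrow> (\<exists>a\<in>hom C x y. \<exists>b\<in>hom C y x.
     kcomp C x y x a b = kid C x \<and> kcomp C y x y b a = kid C y)"

definition locally_bounded :: "('o, 'k::field) kcat \<Rightarrow> bool" where
  "locally_bounded C \<longleftrightarrow> k_category C \<and>
     (\<forall>x. local_end C x) \<and>
     (\<forall>x y. x \<noteq> y \<longrightarrow> \<not> obj_iso C x y) \<and>
     (\<forall>x. finite {y. hdim C x y \<noteq> 0} \<and> finite {y. hdim C y x \<noteq> 0})"

definition connected_kcat :: "('o, 'k::field) kcat \<Rightarrow> bool" where
  "connected_kcat C \<longleftrightarrow>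
     (\<forall>x y. (x, y) \<in> {(u, v). hdim C u v \<noteq> 0 \<or> hdim C v u \<noteq> 0}\<^sup>*)"

definition rad :: "('o, 'k::field) kcat \<Rightarrow> 'o \<Rightarrow> 'o \<Rightarrow> (nat \<Rightarrow> 'k) set" where
  "rad C x y = {a \<in> hom C x y. x = y \<longrightarrow> \<not> is_unit_end C x a}"

definition rad2 :: "('o, 'k::field) kcat \<Rightarrow> 'o \<Rightarrow> 'o \<Rightarrow> (nat \<Rightarrow> 'k) set" where
  "rad2 C x y = kspan {kcomp C x z y a b | z a b. a \<in> rad C x z \<and> b \<in> rad C z y}"

text \<open>Arrow x -> y of the ordinary quiver: rad(x,y) / rad^2(x,y) \<noteq> 0.\<close>
definition qarrow :: "('o, 'k::field) kcat \<Rightarrow> 'o \<Rightarrow> 'o \<Rightarrow> bool" where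
  "qarrow C x y \<longleftrightarrow> \<not> (rad C x y \<subseteq> rad2 C x y)"

definition qpath :: "('o, 'k::field) kcat \<Rightarrow> 'o list \<Rightarrow> bool" where
  "qpath C p \<longleftrightarrow> p \<noteq> [] \<and> (\<forall>i. Suc i < length p \<longrightarrow> qarrow C (p ! i) (p ! Suc i))"

definition convex :: "('o, 'k::field) kcat \<Rightarrow> 'o set \<Rightarrow> bool" where
  "convex C L \<longleftrightarrow> (\<forall>p. qpath C p \<longrightarrow> hd p \<in> L \<longrightarrow> last p \<in> L \<longrightarrow> set p \<subseteq> L)"

text \<open>Linear quivers: vertex set an interval of int (type A_n, A_infinity, A_infinity^infinity);
  ori m says the edge between m and m+1 is oriented m -> m+1 (otherwise m+1 -> m).\<close>
definition lin_index :: "int set \<Rightarrow> bool" where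
  "lin_index I \<longleftrightarrow> (\<exists>n::nat. n \<ge> 1 \<and> I = {0..<int n}) \<or> I = {0..} \<or> I = UNIV"

definition lpath :: "(int \<Rightarrow> bool) \<Rightarrow> int \<Rightarrow> int \<Rightarrow> bool" where
  "lpath ori i j \<longleftrightarrow> (i \<le> j \<and> (\<forall>m. i \<le> m \<and> m < j \<longrightarrow> ori m)) \<or>
                      (j \<le> i \<and> (\<forall>m. j \<le> m \<and> m < i \<longrightarrow> \<not> ori m))"

text \<open>A line: a convex full subcategory L together with a k-linear isomorphism from the path
  category kQ of a linear quiver Q onto L; phi is the object bijection and e i j the image of the
  (unique) path from i to j.\<close>
definition is_line :: "('o, 'k::field) kcat \<Rightarrow> 'o set \<Rightarrow> bool" where
  "is_line C L \<longleftrightarrow> convex C L \<and>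
     (\<exists>I ori (\<phi>::int \<Rightarrow> 'o) e. lin_index I \<and> bij_betw \<phi> I L \<and>
        (\<forall>i\<in>I. \<forall>j\<in>I. hdim C (\<phi> i) (\<phi> j) = (if lpath ori i j then 1 else 0)) \<and>
        (\<forall>i\<in>I. \<forall>j\<in>I. lpath ori i j \<longrightarrow> e i j \<in> hom C (\<phi> i) (\<phi> j) \<and> e i j \<noteq> vzero) \<and>
        (\<forall>i\<in>I. e i i = kid C (\<phi> i)) \<and>
        (\<forall>i\<in>I. \<forall>j\<in>I. \<forall>l\<in>I. lpath ori i j \<longrightarrow> lpath ori j l \<longrightarrow>
            kcomp C (\<phi> i) (\<phi> j) (\<phi> l) (e i j) (e j l) = e i l))"

text \<open>M(x) = kspace (mdim M x); for a : x -> y, mact M x y a : M(y) -> M(x).\<close>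
record ('o, 'k) kmod =
  mdim :: "'o \<Rightarrow> nat"
  mact :: "'o \<Rightarrow> 'o \<Rightarrow> (nat \<Rightarrow> 'k) \<Rightarrow> (nat \<Rightarrow> 'k) \<Rightarrow> (nat \<Rightarrow> 'k)"

definition is_module :: "('o, 'k::field) kcat \<Rightarrow> ('o, 'k) kmod \<Rightarrow> bool" where
  "is_module C M \<longleftrightarrow>
     (\<forall>x y a. a \<in> hom C x y \<longrightarrow> linear_on (mdim M y) (mdim M x) (mact M x y a)) \<and>
     (\<forall>x y a b c v. a \<in> hom C x y \<longrightarrow> b \<in> hom C x y \<longrightarrow> v \<in> kspace (mdim M y) \<longrightarrow>
        mact M x y (vadd (vsmult c a) b) v = vadd (vsmult c (mact M x y a v)) (mact M x y b v)) \<and>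
     (\<forall>x v. v \<in> kspace (mdim M x) \<longrightarrow> mact M x x (kid C x) v = v) \<and>
     (\<forall>x y z a b v. a \<in> hom C x y \<longrightarrow> b \<in> hom C y z \<longrightarrow> v \<in> kspace (mdim M z) \<longrightarrow>
        mact M x z (kcomp C x y z a b) v = mact M x y a (mact M y z b v))"

definition mod_iso :: "('o, 'k::field) kcat \<Rightarrow> ('o, 'k) kmod \<Rightarrow> ('o, 'k) kmod \<Rightarrow> bool" where
  "mod_iso C M N \<longleftrightarrow> (\<exists>f. (\<forall>x. linear_on (mdim M x) (mdim N x) (f x) \<and>
        bij_betw (f x) (kspace (mdim M x)) (kspace (mdim N x))) \<and>
     (\<forall>x y a v. a \<in> hom C x y \<longrightarrow> v \<in> kspace (mdim M y) \<longrightarrow>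
        f x (mact M x y a v) = mact N x y a (f y v)))"

definition is_submodule :: "('o, 'k::field) kcat \<Rightarrow> ('o, 'k) kmod \<Rightarrow> ('o \<Rightarrow> (nat \<Rightarrow> 'k) set) \<Rightarrow> bool" where
  "is_submodule C M U \<longleftrightarrow>
     (\<forall>x. U x \<subseteq> kspace (mdim M x) \<and> vzero \<in> U x \<and>
        (\<forall>u\<in>U x. \<forall>w\<in>U x. \<forall>c. vadd (vsmult c u) w \<in> U x)) \<and>
     (\<forall>x y a u. a \<in> hom C x y \<longrightarrow> u \<in> U y \<longrightarrow> mact M x y a u \<in> U x)"

definition indecomposable :: "('o, 'k::field) kcat \<Rightarrow> ('o, 'k) kmod \<Rightarrow> bool" where
  "indecomposable C M \<longleftrightarrow> is_module C M \<and> (\<exists>x. mdim M x \<noteq> 0) \<and>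
     (\<forall>U V. is_submodule C M U \<longrightarrow> is_submodule C M V \<longrightarrow>
        (\<forall>x. U x \<inter> V x = {vzero} \<and> {vadd u v | u v. u \<in> U x \<and> v \<in> V x} = kspace (mdim M x)) \<longrightarrow>
        (\<forall>x. U x = {vzero}) \<or> (\<forall>x. V x = {vzero}))"

definition supp :: "('o, 'k) kmod \<Rightarrow> 'o set" where
  "supp M = {x. mdim M x \<noteq> 0}"

type_synonym ('o, 'k) kaut = "('o \<Rightarrow> 'o) \<times> ('o \<Rightarrow> 'o \<Rightarrow> (nat \<Rightarrow> 'k) \<Rightarrow> (nat \<Rightarrow> 'k))"

text \<open>F is normalised to be the identity
  outside Hom(x,y) so that equality of automorphisms is HOL equality.\<close>
definition is_kaut :: "('o, 'k::field) kcat \<Rightarrow> ('o, 'k) kaut \<Rightarrow> bool" where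
  "is_kaut C g \<longleftrightarrow> bij (fst g) \<and>
     (\<forall>x y. linear_on (hdim C x y) (hdim C (fst g x) (fst g y)) (snd g x y) \<and>
        bij_betw (snd g x y) (hom C x y) (hom C (fst g x) (fst g y))) \<and>
     (\<forall>x y v. v \<notin> hom C x y \<longrightarrow> snd g x y v = v) \<and>
     (\<forall>x. snd g x x (kid C x) = kid C (fst g x)) \<and>
     (\<forall>x y z a b. a \<in> hom C x y \<longrightarrow> b \<in> hom C y z \<longrightarrow>
        snd g x z (kcomp C x y z a b) = kcomp C (fst g x) (fst g y) (fst g z) (snd g x y a) (snd g y z b))"

definition aut_comp :: "('o, 'k::field) kcat \<Rightarrow> ('o, 'k) kaut \<Rightarrow> ('o, 'k) kaut \<Rightarrow> ('o, 'k) kaut" where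
  "aut_comp C g h = (fst g \<circ> fst h,
     (\<lambda>x y v. if v \<in> hom C x y then snd g (fst h x) (fst h y) (snd h x y v) else v))"

definition aut_id :: "('o, 'k) kaut" where
  "aut_id = (id, (\<lambda>x y v. v))"

definition aut_group :: "('o, 'k::field) kcat \<Rightarrow> ('o, 'k) kaut set \<Rightarrow> ('o, 'k) kaut monoid" where
  "aut_group C Gs = \<lparr>carrier = Gs, mult = aut_comp C, one = aut_id\<rparr>"

definition mod_twist :: "('o, 'k) kmod \<Rightarrow> ('o, 'k) kaut \<Rightarrow> ('o, 'k) kmod" where
  "mod_twist M h = \<lparr>mdim = mdim M \<circ> fst h,
     mact = (\<lambda>x y a. mact M (fst h x) (fst h y) (snd h x y a))\<rparr>"

definition gtwist :: "('o, 'k::field) kcat \<Rightarrow> ('o, 'k) kaut set \<Rightarrow> ('o, 'k) kaut \<Rightarrow> ('o, 'k) kmod \<Rightarrow> ('o, 'k) kmod" where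
  "gtwist C Gs g M = mod_twist M (inv\<^bsub>aut_group C Gs\<^esub> g)"

definition acts_freely_ind :: "('o, 'k::field) kcat \<Rightarrow> ('o, 'k) kaut set \<Rightarrow> bool" where
  "acts_freely_ind C Gs \<longleftrightarrow> (\<forall>M g. is_module C M \<longrightarrow> finite (supp M) \<longrightarrow> indecomposable C M \<longrightarrow>
      g \<in> Gs \<longrightarrow> g \<noteq> aut_id \<longrightarrow> \<not> mod_iso C (gtwist C Gs g M) M)"

definition stab :: "('o, 'k::field) kcat \<Rightarrow> ('o, 'k) kaut set \<Rightarrow> ('o, 'k) kmod \<Rightarrow> ('o, 'k) kaut set" where
  "stab C Gs M = {g \<in> Gs. mod_iso C (gtwist C Gs g M) M}"

definition weakly_G_periodic :: "('o, 'k::field) kcat \<Rightarrow> ('o, 'k) kaut set \<Rightarrow> ('o, 'k) kmod \<Rightarrow> bool" where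
  "weakly_G_periodic C Gs Y \<longleftrightarrow> is_module C Y \<and> indecomposable C Y \<and> infinite (supp Y) \<and>
     finite ((\<lambda>x. (\<lambda>g. fst g x) ` stab C Gs Y) ` supp Y)"

definition is_BL :: "('o, 'k::field) kcat \<Rightarrow> 'o set \<Rightarrow> ('o, 'k) kmod \<Rightarrow> bool" where
  "is_BL C L B \<longleftrightarrow> is_module C B \<and> (\<forall>x. mdim B x = (if x \<in> L then 1 else 0)) \<and>
     (\<forall>x\<in>L. \<forall>y\<in>L. \<forall>a\<in>hom C x y. a \<noteq> vzero \<longrightarrow> (\<exists>v\<in>kspace (mdim B y). mact B x y a v \<noteq> vzero))"

end

theory Submission
  imports Defs
begin

text \<open>Every g in the stabiliser H of B maps the support L of B onto itself and preserves the
  dimensions of Hom spaces, so it induces an automorphism of the linear quiver indexing L.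
  Since L is infinite, that quiver is of type A_infinity or A_infinity^infinity, and an automorphism
  of it either has a fixed point or is a translation of the integers. A fixed point x of g forces
  g = 1: as End(x) = k, the simple module S_x is then isomorphic to its twist by g, which freeness
  of the action forbids. Hence the translation amount embeds H into the integers, and weak
  periodicity (L infinite, L/H finite) makes H nontrivial, so H is infinite cyclic.\<close>

lemma vadd_vzero_right [simp]: "vadd v vzero = v" by (simp add: vadd_def vzero_def)
lemma vsmult_vzero [simp]: "vsmult c vzero = vzero" by (simp add: vsmult_def vzero_def)
lemma vsmult_1 [simp]: "vsmult 1 v = v" by (simp add: vsmult_def)
lemma vsmult_0 [simp]: "vsmult 0 v = vzero" by (simp add: vsmult_def vzero_def)
lemma vsmult_vsmult [simp]: "vsmult c (vsmult d v) = vsmult (c * d) v" by (simp add: vsmult_def mult.assoc)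


lemma kspace_vzero [simp]: "vzero \<in> kspace n"
  by (simp add: kspace_def vzero_def)

lemma kspace_vadd_vsmult: "v \<in> kspace n \<Longrightarrow> w \<in> kspace n \<Longrightarrow> vadd (vsmult c v) w \<in> kspace n"
  by (simp add: kspace_def vadd_def vsmult_def)

lemma kspace_vsmult: "v \<in> kspace n \<Longrightarrow> vsmult c v \<in> kspace n"
  by (simp add: kspace_def vsmult_def)

lemma kspace_0: "kspace 0 = {vzero}"
  by (auto simp: kspace_def vzero_def)

lemma kspace_nontrivial:
  assumes "n \<noteq> 0"
  shows "\<exists>v\<in>kspace n. v \<noteq> (vzero :: nat \<Rightarrow> 'k::field)"
proof
  show "(\<lambda>i. if i = 0 then 1 else 0) \<in> (kspace n :: (nat \<Rightarrow> 'k) set)"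
    using assms by (auto simp: kspace_def)
qed (auto simp: vzero_def fun_eq_iff)

lemma card_kspace_eq_1_iff: "card (kspace n :: (nat \<Rightarrow> 'k::field) set) = 1 \<longleftrightarrow> n = 0"
proof
  assume "card (kspace n :: (nat \<Rightarrow> 'k) set) = 1"
  then obtain v :: "nat \<Rightarrow> 'k" where "kspace n = {v}" by (rule card_1_singletonE)
  then show "n = 0" using kspace_vzero[of n] kspace_nontrivial[of n] by (metis singletonD)
qed (simp add: kspace_0)

lemma bij_betw_kspace_0_iff:
  "bij_betw f (kspace m) (kspace n :: (nat \<Rightarrow> 'k::field) set) \<Longrightarrow> m = 0 \<longleftrightarrow> n = 0"
  by (metis bij_betw_same_card card_kspace_eq_1_iff)

lemma kspace_1_eq_vzero: "w \<in> kspace 1 \<Longrightarrow> w 0 = 0 \<Longrightarrow> w = vzero"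
proof (rule ext)
  fix i assume "w \<in> kspace 1" "w 0 = 0"
  then show "w i = vzero i" by (cases "i = 0") (auto simp: kspace_def vzero_def)
qed

lemma kspace_1_multiple:
  "w \<in> kspace 1 \<Longrightarrow> u \<in> kspace 1 \<Longrightarrow> u 0 \<noteq> 0 \<Longrightarrow> w = vsmult (w 0 / u 0) (u :: nat \<Rightarrow> 'k::field)"
proof (rule ext)
  fix i assume "w \<in> kspace 1" "u \<in> kspace 1" "u 0 \<noteq> 0"
  then show "w i = vsmult (w 0 / u 0) u i" by (cases "i = 0") (auto simp: kspace_def vsmult_def)
qed

lemma vadd_self_eq_imp_vzero: "vadd z z = z \<Longrightarrow> z = (vzero :: nat \<Rightarrow> 'k::field)"
proof (rule ext)
  fix i assume "vadd z z = z"
  then have "z i + z i = z i" by (metis vadd_def)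
  then show "z i = vzero i" by (metis add_cancel_left_right vzero_def)
qed

lemma linear_on_vzero: "linear_on n m f \<Longrightarrow> f vzero = (vzero :: nat \<Rightarrow> 'k::field)"
  unfolding linear_on_def
  by (metis kspace_vzero vadd_self_eq_imp_vzero vadd_vzero_right vsmult_1)

lemma linear_on_vsmult: "linear_on n m f \<Longrightarrow> v \<in> kspace n \<Longrightarrow> f (vsmult c v) = vsmult c (f v)"
  using linear_on_vzero[of n m f] unfolding linear_on_def
  by (metis kspace_vzero vadd_vzero_right)

lemma linear_on_id: "linear_on n n (\<lambda>v. v)"
  by (simp add: linear_on_def)

lemma linear_on_comp: "linear_on n m f \<Longrightarrow> linear_on m p g \<Longrightarrow> linear_on n p (g \<circ> f)"
  unfolding linear_on_def by (simp add: kspace_vadd_vsmult kspace_vsmult)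

lemma linear_on_inv_into:
  fixes f :: "(nat \<Rightarrow> 'k::field) \<Rightarrow> (nat \<Rightarrow> 'k)"
  assumes lin: "linear_on n m f" and bij: "bij_betw f (kspace n) (kspace m)"
  shows "linear_on m n (inv_into (kspace n) f)"
  unfolding linear_on_def
proof (intro conjI ballI allI)
  let ?g = "inv_into (kspace n) f"
  have g_in: "?g v \<in> kspace n" and f_g: "f (?g v) = v" if "v \<in> kspace m" for v
    using bij that by (auto simp: bij_betw_def inv_into_into f_inv_into_f)
  fix v :: "nat \<Rightarrow> 'k" assume "v \<in> kspace m"
  then show "?g v \<in> kspace n" by (rule g_in)
  fix c :: 'k and w :: "nat \<Rightarrow> 'k" assume v: "v \<in> kspace m" and w: "w \<in> kspace m"
  let ?u = "vadd (vsmult c (?g v)) (?g w)"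
  have "?u \<in> kspace n" by (simp add: g_in v w kspace_vadd_vsmult)
  moreover have "f ?u = vadd (vsmult c v) w"
    using lin g_in f_g v w unfolding linear_on_def by metis
  ultimately show "?g (vadd (vsmult c v) w) = ?u"
    using bij by (metis bij_betw_def inv_into_f_f)
qed

lemma mod_isoE:
  fixes M N :: "('o, 'k::field) kmod"
  assumes "mod_iso C M N"
  obtains f :: "'o \<Rightarrow> (nat \<Rightarrow> 'k) \<Rightarrow> (nat \<Rightarrow> 'k)" where "\<And>x. linear_on (mdim M x) (mdim N x) (f x)"
    and "\<And>x. bij_betw (f x) (kspace (mdim M x)) (kspace (mdim N x))"
    and "\<And>x y a v. a \<in> hom C x y \<Longrightarrow> v \<in> kspace (mdim M y) \<Longrightarrow>
      f x (mact M x y a v) = mact N x y a (f y v)"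
proof -
  obtain f :: "'o \<Rightarrow> (nat \<Rightarrow> 'k) \<Rightarrow> (nat \<Rightarrow> 'k)"
    where "\<forall>x. linear_on (mdim M x) (mdim N x) (f x) \<and> bij_betw (f x) (kspace (mdim M x)) (kspace (mdim N x))"
      and "\<forall>x y a v. a \<in> hom C x y \<longrightarrow> v \<in> kspace (mdim M y) \<longrightarrow> f x (mact M x y a v) = mact N x y a (f y v)"
    using assms unfolding mod_iso_def by blast
  then show thesis by (intro that[of f]) simp_all
qed

lemma mod_isoI:
  fixes M N :: "('o, 'k::field) kmod" and f :: "'o \<Rightarrow> (nat \<Rightarrow> 'k) \<Rightarrow> (nat \<Rightarrow> 'k)"
  assumes "\<And>x. linear_on (mdim M x) (mdim N x) (f x)"
    and "\<And>x. bij_betw (f x) (kspace (mdim M x)) (kspace (mdim N x))"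
    and "\<And>x y a v. a \<in> hom C x y \<Longrightarrow> v \<in> kspace (mdim M y) \<Longrightarrow>
      f x (mact M x y a v) = mact N x y a (f y v)"
  shows "mod_iso C M N"
  unfolding mod_iso_def using assms by (intro exI[of _ f]) simp

lemma mod_iso_eqI:
  assumes "mdim M = mdim N"
    and "\<And>x y a v. a \<in> hom C x y \<Longrightarrow> v \<in> kspace (mdim M y) \<Longrightarrow> mact M x y a v = mact N x y a v"
  shows "mod_iso C M N"
  by (rule mod_isoI[where f = "\<lambda>x v. v"]) (simp_all add: assms linear_on_id bij_betw_id[unfolded id_def])

lemma mod_iso_trans [trans]:
  fixes M N P :: "('o, 'k::field) kmod"
  assumes "mod_iso C M N" "mod_iso C N P"
  shows "mod_iso C M P"
proof -
  obtain f where f: "\<And>x. linear_on (mdim M x) (mdim N x) (f x)"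
    "\<And>x. bij_betw (f x) (kspace (mdim M x)) (kspace (mdim N x))"
    "\<And>x y a v. a \<in> hom C x y \<Longrightarrow> v \<in> kspace (mdim M y) \<Longrightarrow> f x (mact M x y a v) = mact N x y a (f y v)"
    using assms(1) by (rule mod_isoE) blast
  obtain g where g: "\<And>x. linear_on (mdim N x) (mdim P x) (g x)"
    "\<And>x. bij_betw (g x) (kspace (mdim N x)) (kspace (mdim P x))"
    "\<And>x y a v. a \<in> hom C x y \<Longrightarrow> v \<in> kspace (mdim N y) \<Longrightarrow> g x (mact N x y a v) = mact P x y a (g y v)"
    using assms(2) by (rule mod_isoE) blast
  show ?thesis
  proof (rule mod_isoI[where f = "\<lambda>x. g x \<circ> f x"])
    show "linear_on (mdim M x) (mdim P x) (g x \<circ> f x)" for x using f(1) g(1) by (rule linear_on_comp)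
    show "bij_betw (g x \<circ> f x) (kspace (mdim M x)) (kspace (mdim P x))" for x
      using f(2) g(2) by (rule bij_betw_trans)
    fix x y a and v :: "nat \<Rightarrow> 'k" assume a: "a \<in> hom C x y" and v: "v \<in> kspace (mdim M y)"
    have "f y v \<in> kspace (mdim N y)" using f(2)[of y] v by (rule bij_betw_apply)
    then show "(g x \<circ> f x) (mact M x y a v) = mact P x y a ((g y \<circ> f y) v)"
      using f(3)[OF a v] g(3)[OF a] by simp
  qed
qed

lemma mod_iso_sym:
  fixes M N :: "('o, 'k::field) kmod"
  assumes M: "is_module C M" and "mod_iso C M N"
  shows "mod_iso C N M"
proof -
  obtain f where f: "\<And>x. linear_on (mdim M x) (mdim N x) (f x)"
    "\<And>x. bij_betw (f x) (kspace (mdim M x)) (kspace (mdim N x))"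
    "\<And>x y a v. a \<in> hom C x y \<Longrightarrow> v \<in> kspace (mdim M y) \<Longrightarrow> f x (mact M x y a v) = mact N x y a (f y v)"
    using assms(2) by (rule mod_isoE) blast
  let ?g = "\<lambda>x. inv_into (kspace (mdim M x)) (f x)"
  show ?thesis
  proof (rule mod_isoI[where f = ?g])
    show "linear_on (mdim N x) (mdim M x) (?g x)" for x using f(1,2) by (rule linear_on_inv_into)
    show "bij_betw (?g x) (kspace (mdim N x)) (kspace (mdim M x))" for x
      using f(2) by (rule bij_betw_inv_into)
    fix x y a and w :: "nat \<Rightarrow> 'k" assume a: "a \<in> hom C x y" and w: "w \<in> kspace (mdim N y)"
    have v: "?g y w \<in> kspace (mdim M y)" and fv: "f y (?g y w) = w"
      using f(2) w by (auto simp: bij_betw_def inv_into_into f_inv_into_f)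
    have "mact M x y a (?g y w) \<in> kspace (mdim M x)"
      using M a v unfolding is_module_def linear_on_def by blast
    moreover have "f x (mact M x y a (?g y w)) = mact N x y a w" using f(3) a v fv by metis
    ultimately show "?g x (mact N x y a w) = mact M x y a (?g y w)"
      using f(2) by (metis bij_betw_def inv_into_f_f)
  qed
qed

lemma kaut_hom: "is_kaut C g \<Longrightarrow> a \<in> hom C x y \<Longrightarrow> snd g x y a \<in> hom C (fst g x) (fst g y)"
  unfolding is_kaut_def bij_betw_def by blast

lemma mod_iso_mod_twist:
  fixes M N :: "('o, 'k::field) kmod"
  assumes "mod_iso C M N" "is_kaut C g"
  shows "mod_iso C (mod_twist M g) (mod_twist N g)"
  using assms(1)
proof (rule mod_isoE)
  fix f assume "\<And>x. linear_on (mdim M x) (mdim N x) (f x)"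
    "\<And>x. bij_betw (f x) (kspace (mdim M x)) (kspace (mdim N x))"
    "\<And>x y a v. a \<in> hom C x y \<Longrightarrow> v \<in> kspace (mdim M y) \<Longrightarrow> f x (mact M x y a v) = mact N x y a (f y v)"
  then show ?thesis
    using kaut_hom[OF assms(2)] by (intro mod_isoI[where f = "\<lambda>x. f (fst g x)"]) (simp_all add: mod_twist_def)
qed

lemma mod_twist_aut_comp: "mod_iso C (mod_twist M (aut_comp C g h)) (mod_twist (mod_twist M g) h)"
  by (rule mod_iso_eqI) (auto simp: mod_twist_def aut_comp_def)

lemma mod_twist_aut_id [simp]: "mod_twist M aut_id = M"
  by (simp add: mod_twist_def aut_id_def)

lemma supp_mod_twist: "supp (mod_twist M g) = fst g -` supp M"
  by (auto simp: supp_def mod_twist_def)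

lemma mod_iso_supp:
  fixes M N :: "('o, 'k::field) kmod"
  assumes "mod_iso C M N"
  shows "supp M = supp N"
  using assms
proof (rule mod_isoE)
  fix f :: "'o \<Rightarrow> (nat \<Rightarrow> 'k) \<Rightarrow> (nat \<Rightarrow> 'k)"
  assume "\<And>x. bij_betw (f x) (kspace (mdim M x)) (kspace (mdim N x))"
  then have "mdim M x = 0 \<longleftrightarrow> mdim N x = 0" for x by (rule bij_betw_kspace_0_iff)
  then show ?thesis by (simp add: supp_def)
qed

lemma aut_group_simps [simp]:
  "carrier (aut_group C Gs) = Gs" "mult (aut_group C Gs) = aut_comp C" "one (aut_group C Gs) = aut_id"
  by (simp_all add: aut_group_def)

lemma fst_aut_comp [simp]: "fst (aut_comp C g h) = fst g \<circ> fst h"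
  by (simp add: aut_comp_def)

lemma fst_aut_id [simp]: "fst aut_id = id"
  by (simp add: aut_id_def)

lemma fst_aut_group_inv:
  assumes "group (aut_group C Gs)" "g \<in> Gs"
  shows "fst (inv\<^bsub>aut_group C Gs\<^esub> g) (fst g y) = y" "fst g (fst (inv\<^bsub>aut_group C Gs\<^esub> g) y) = y"
  using arg_cong[OF group.l_inv[OF assms(1)], of g fst] arg_cong[OF group.r_inv[OF assms(1)], of g fst]
    assms(2) by (simp_all add: fun_eq_iff)

lemma hom_vzero [simp]: "vzero \<in> hom C x y"
  by (simp add: hom_def)

lemma hom_vadd_vsmult: "a \<in> hom C x y \<Longrightarrow> b \<in> hom C x y \<Longrightarrow> vadd (vsmult c a) b \<in> hom C x y"
  by (simp add: hom_def kspace_vadd_vsmult)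

lemma hom_vsmult: "a \<in> hom C x y \<Longrightarrow> vsmult c a \<in> hom C x y"
  by (simp add: hom_def kspace_vsmult)

context
  fixes C :: "('o, 'k::field) kcat"
  assumes kc: "k_category C"
begin

lemma kid_hom: "kid C x \<in> hom C x x"
  using kc unfolding k_category_def by simp

lemma kcomp_hom: "a \<in> hom C x y \<Longrightarrow> b \<in> hom C y z \<Longrightarrow> kcomp C x y z a b \<in> hom C x z"
  using kc unfolding k_category_def by simp

lemma kcomp_linear_left: "a \<in> hom C x y \<Longrightarrow> a' \<in> hom C x y \<Longrightarrow> b \<in> hom C y z \<Longrightarrow>
    kcomp C x y z (vadd (vsmult c a) a') b = vadd (vsmult c (kcomp C x y z a b)) (kcomp C x y z a' b)"
  using kc unfolding k_category_def by simp

lemma kcomp_linear_right: "a \<in> hom C x y \<Longrightarrow> b \<in> hom C y z \<Longrightarrow> b' \<in> hom C y z \<Longrightarrow>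
    kcomp C x y z a (vadd (vsmult c b) b') = vadd (vsmult c (kcomp C x y z a b)) (kcomp C x y z a b')"
  using kc unfolding k_category_def by simp

lemma kcomp_assoc: "a \<in> hom C x y \<Longrightarrow> b \<in> hom C y z \<Longrightarrow> d \<in> hom C z w \<Longrightarrow>
    kcomp C x y w a (kcomp C y z w b d) = kcomp C x z w (kcomp C x y z a b) d"
  using kc unfolding k_category_def by simp

lemma kcomp_kid_left: "a \<in> hom C x y \<Longrightarrow> kcomp C x x y (kid C x) a = a"
  using kc unfolding k_category_def by simp

lemma kcomp_kid_right: "a \<in> hom C x y \<Longrightarrow> kcomp C x y y a (kid C y) = a"
  using kc unfolding k_category_def by simp

lemma kcomp_vzero_left: "b \<in> hom C y z \<Longrightarrow> kcomp C x y z vzero b = vzero"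
  using kcomp_linear_left[OF hom_vzero hom_vzero, of b y z x 1] by (simp add: vadd_self_eq_imp_vzero)

lemma kcomp_vzero_right: "a \<in> hom C x y \<Longrightarrow> kcomp C x y z a vzero = vzero"
  using kcomp_linear_right[OF _ hom_vzero hom_vzero, of a x y z 1] by (simp add: vadd_self_eq_imp_vzero)

lemma kcomp_vsmult_left: "a \<in> hom C x y \<Longrightarrow> b \<in> hom C y z \<Longrightarrow>
    kcomp C x y z (vsmult c a) b = vsmult c (kcomp C x y z a b)"
  using kcomp_linear_left[of a x y vzero b z c] kcomp_vzero_left by simp

lemma kcomp_vsmult_right: "a \<in> hom C x y \<Longrightarrow> b \<in> hom C y z \<Longrightarrow>
    kcomp C x y z a (vsmult c b) = vsmult c (kcomp C x y z a b)"
  using kcomp_linear_right[of a x y b z vzero c] kcomp_vzero_right by simp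

lemma is_unit_end_kid: "is_unit_end C x (kid C x)"
  unfolding is_unit_end_def using kid_hom kcomp_kid_left by blast

lemma local_end_idempotent:
  assumes loc: "local_end C q" and e: "e \<in> hom C q q" and ee: "kcomp C q q q e e = e"
  shows "e = vzero \<or> e = kid C q"
proof -
  define f where "f = vadd (vsmult (-1) e) (kid C q)"
  have f: "f \<in> hom C q q" unfolding f_def by (simp add: e hom_vadd_vsmult kid_hom)
  have "vadd e f = kid C q" unfolding f_def by (simp add: vadd_def vsmult_def fun_eq_iff)
  then have "is_unit_end C q e \<or> is_unit_end C q f"
    using loc e f is_unit_end_kid unfolding local_end_def by metis
  then show ?thesis
  proof
    assume "is_unit_end C q e"
    then obtain u where u: "u \<in> hom C q q" "kcomp C q q q e u = kid C q"
      unfolding is_unit_end_def by blast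
    have "e = kcomp C q q q e (kcomp C q q q e u)" using u(2) by (simp add: e kcomp_kid_right)
    also have "\<dots> = kcomp C q q q (kcomp C q q q e e) u" by (rule kcomp_assoc[OF e e u(1)])
    also have "\<dots> = kid C q" using ee u(2) by simp
    finally show ?thesis by blast
  next
    assume "is_unit_end C q f"
    then obtain u where u: "u \<in> hom C q q" "kcomp C q q q u f = kid C q"
      unfolding is_unit_end_def by blast
    have "kcomp C q q q f e = vadd (vsmult (-1) e) e"
      unfolding f_def using kcomp_linear_left[OF e kid_hom e] ee by (simp add: kcomp_kid_left e)
    also have "\<dots> = vzero" by (simp add: vadd_def vsmult_def vzero_def)
    finally have fe: "kcomp C q q q f e = vzero" .
    have "e = kcomp C q q q (kcomp C q q q u f) e" using u(2) by (simp add: e kcomp_kid_left)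
    also have "\<dots> = vzero" using kcomp_assoc[OF u(1) f e] fe by (simp add: u(1) kcomp_vzero_right)
    finally show ?thesis by blast
  qed
qed

end

lemma locally_bounded_k_category: "locally_bounded C \<Longrightarrow> k_category C"
  by (simp add: locally_bounded_def)

lemma kid_neq_vzero: "locally_bounded C \<Longrightarrow> kid C x \<noteq> vzero"
  by (simp add: locally_bounded_def local_end_def)

section \<open>Simple modules at objects with trivial endomorphism ring\<close>

text \<open>Only meaningful when hdim C x x = 1; then a = end_scalar C x a \<cdot> kid C x.\<close>

definition end_scalar :: "('o, 'k::field) kcat \<Rightarrow> 'o \<Rightarrow> (nat \<Rightarrow> 'k) \<Rightarrow> 'k" where
  "end_scalar C x a = a 0 / kid C x 0"

lemma end_scalar_vadd_vsmult:
  "end_scalar C x (vadd (vsmult c a) b) = c * end_scalar C x a + end_scalar C x b"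
  by (simp add: end_scalar_def vadd_def vsmult_def add_divide_distrib)

lemma end_scalar_vsmult: "end_scalar C x (vsmult c a) = c * end_scalar C x a"
  by (simp add: end_scalar_def vsmult_def)

text \<open>The simple module S_x. It is a module because every endomorphism of x factoring
  through another object acts by 0 (end_scalar_kcomp_through).\<close>

definition simple_mod :: "('o, 'k::field) kcat \<Rightarrow> 'o \<Rightarrow> ('o, 'k) kmod" where
  "simple_mod C x = \<lparr>mdim = (\<lambda>y. if y = x then 1 else 0),
     mact = (\<lambda>p q a v. if p = x \<and> q = x then vsmult (end_scalar C x a) v else vzero)\<rparr>"

lemma mdim_simple_mod [simp]: "mdim (simple_mod C x) y = (if y = x then 1 else 0)"
  by (simp add: simple_mod_def)

lemma mact_simple_mod [simp]:
  "mact (simple_mod C x) p q a v = (if p = x \<and> q = x then vsmult (end_scalar C x a) v else vzero)"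
  by (simp add: simple_mod_def)

lemma finite_supp_simple_mod: "finite (supp (simple_mod C x))"
proof -
  have "supp (simple_mod C x) = {x}" by (auto simp: supp_def)
  then show ?thesis by simp
qed

context
  fixes C :: "('o, 'k::field) kcat" and x :: 'o
  assumes lb: "locally_bounded C" and hx: "hdim C x x = 1"
begin

lemma kid_coord_neq_0: "kid C x 0 \<noteq> 0"
proof
  assume "kid C x 0 = 0"
  moreover have "kid C x \<in> kspace 1"
    using kid_hom[OF locally_bounded_k_category[OF lb]] hx by (metis hom_def)
  ultimately show False using kspace_1_eq_vzero kid_neq_vzero[OF lb] by blast
qed

lemma end_scalar_kid: "end_scalar C x (kid C x) = 1"
  by (simp add: end_scalar_def kid_coord_neq_0)

lemma end_eq_vsmult_kid: "a \<in> hom C x x \<Longrightarrow> a = vsmult (end_scalar C x a) (kid C x)"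
  using kspace_1_multiple[of a "kid C x"] kid_coord_neq_0 kid_hom[OF locally_bounded_k_category[OF lb], of x] hx
  unfolding end_scalar_def hom_def by simp

lemma end_scalar_kcomp:
  assumes a: "a \<in> hom C x x" and b: "b \<in> hom C x x"
  shows "end_scalar C x (kcomp C x x x a b) = end_scalar C x a * end_scalar C x b"
proof -
  have kc: "k_category C" using lb by (rule locally_bounded_k_category)
  have "kcomp C x x x a b = kcomp C x x x a (vsmult (end_scalar C x b) (kid C x))"
    using end_eq_vsmult_kid[OF b] by simp
  also have "\<dots> = vsmult (end_scalar C x b) a"
    by (simp add: a kc kcomp_kid_right kcomp_vsmult_right kid_hom)
  finally show ?thesis by (simp add: end_scalar_vsmult)
qed

text \<open>A nonzero scalar would split kid C x through q; by locality of End(q) the resulting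
  idempotent of q is 0 or 1, and both are impossible.\<close>

lemma end_scalar_kcomp_through:
  assumes q: "q \<noteq> x" and a: "a \<in> hom C x q" and b: "b \<in> hom C q x"
  shows "end_scalar C x (kcomp C x q x a b) = 0"
proof (rule ccontr)
  have kc: "k_category C" using lb by (rule locally_bounded_k_category)
  let ?c = "end_scalar C x (kcomp C x q x a b)"
  assume c: "?c \<noteq> 0"
  define a' where "a' = vsmult (1 / ?c) a"
  have a': "a' \<in> hom C x q" using a by (simp add: a'_def hom_vsmult)
  have a'b: "kcomp C x q x a' b = kid C x"
  proof -
    have "kcomp C x q x a' b = vsmult (1 / ?c) (kcomp C x q x a b)"
      unfolding a'_def using kcomp_vsmult_left[OF kc a b] .
    also have "\<dots> = vsmult (1 / ?c) (vsmult ?c (kid C x))"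
      using end_eq_vsmult_kid[OF kcomp_hom[OF kc a b]] by simp
    finally show ?thesis using c by simp
  qed
  define e where "e = kcomp C q x q b a'"
  have e: "e \<in> hom C q q" unfolding e_def using kcomp_hom[OF kc b a'] .
  have "kcomp C q q q e e = kcomp C q x q b (kcomp C x x q (kcomp C x q x a' b) a')"
    unfolding e_def using kcomp_assoc[OF kc b a' e] kcomp_assoc[OF kc a' b a'] e_def by simp
  then have "kcomp C q q q e e = e" unfolding a'b e_def by (simp add: a' kc kcomp_kid_left)
  then have "e = vzero \<or> e = kid C q"
    using local_end_idempotent[OF kc _ e] lb unfolding locally_bounded_def by blast
  then show False
  proof
    assume "e = vzero"
    have "kid C x = kcomp C x q x a' (kcomp C q x x b (kid C x))"
      using a'b by (simp add: b kc kcomp_kid_right)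
    also have "\<dots> = kcomp C x q x a' (kcomp C q q x e b)"
      unfolding e_def using kcomp_assoc[OF kc b a' b] a'b by simp
    also have "\<dots> = vzero" using \<open>e = vzero\<close> by (simp add: a' b kc kcomp_vzero_left kcomp_vzero_right)
    finally show False using kid_neq_vzero[OF lb] by blast
  next
    assume "e = kid C q"
    then have "obj_iso C x q" unfolding obj_iso_def e_def using a' b a'b by blast
    then show False using lb q unfolding locally_bounded_def by metis
  qed
qed

lemma is_module_simple_mod: "is_module C (simple_mod C x)"
  unfolding is_module_def
proof (intro conjI allI impI)
  fix p q and a :: "nat \<Rightarrow> 'k" assume "a \<in> hom C p q"
  show "linear_on (mdim (simple_mod C x) q) (mdim (simple_mod C x) p) (mact (simple_mod C x) p q a)"
  proof (cases "p = x \<and> q = x")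
    case True
    then show ?thesis
      by (auto simp: linear_on_def kspace_vsmult) (simp add: vsmult_def vadd_def fun_eq_iff ring_distribs)
  qed (auto simp: linear_on_def)
next
  fix p q a b c and v :: "nat \<Rightarrow> 'k"
  show "mact (simple_mod C x) p q (vadd (vsmult c a) b) v =
       vadd (vsmult c (mact (simple_mod C x) p q a v)) (mact (simple_mod C x) p q b v)"
    by (cases "p = x \<and> q = x")
      (auto simp: end_scalar_vadd_vsmult, auto simp: vsmult_def vadd_def vzero_def fun_eq_iff ring_distribs)
next
  fix p and v :: "nat \<Rightarrow> 'k" assume "v \<in> kspace (mdim (simple_mod C x) p)"
  then show "mact (simple_mod C x) p p (kid C p) v = v"
    by (cases "p = x") (simp_all add: end_scalar_kid kspace_0)
next
  fix p q r a b and v :: "nat \<Rightarrow> 'k"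
  assume a: "a \<in> hom C p q" and b: "b \<in> hom C q r"
  show "mact (simple_mod C x) p r (kcomp C p q r a b) v =
        mact (simple_mod C x) p q a (mact (simple_mod C x) q r b v)"
    using a b end_scalar_kcomp[of a b] end_scalar_kcomp_through[of q a b]
    by (cases "q = x") (auto simp: mult.commute)
qed

lemma indecomposable_simple_mod: "indecomposable C (simple_mod C x)"
  unfolding indecomposable_def
proof (intro conjI allI impI)
  show "is_module C (simple_mod C x)" by (rule is_module_simple_mod)
  show "\<exists>y. mdim (simple_mod C x) y \<noteq> 0" by auto
next
  fix U V assume U: "is_submodule C (simple_mod C x) U" and V: "is_submodule C (simple_mod C x) V"
    and UV: "\<forall>y. U y \<inter> V y = {vzero} \<and>
      {vadd u v |u v. u \<in> U y \<and> v \<in> V y} = kspace (mdim (simple_mod C x) y)"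
  have U_sub: "U y \<subseteq> kspace (mdim (simple_mod C x) y)" "vzero \<in> U y"
    "\<forall>u\<in>U y. \<forall>w\<in>U y. \<forall>c. vadd (vsmult c u) w \<in> U y" for y
    using U unfolding is_submodule_def by blast+
  have V_sub: "V y \<subseteq> kspace (mdim (simple_mod C x) y)" "vzero \<in> V y" for y
    using V unfolding is_submodule_def by blast+
  show "(\<forall>y. U y = {vzero}) \<or> (\<forall>y. V y = {vzero})"
  proof (rule ccontr)
    assume "\<not> ?thesis"
    moreover have "U y = {vzero}" "V y = {vzero}" if "y \<noteq> x" for y
      using U_sub(1,2)[of y] V_sub[of y] that by (auto simp: kspace_0)
    ultimately have "U x \<noteq> {vzero}" "V x \<noteq> {vzero}" by metis+
    then obtain u v where u: "u \<in> U x" "u \<noteq> vzero" and v: "v \<in> V x" "v \<noteq> vzero"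
      using U_sub(2) V_sub(2) by blast
    have u1: "u \<in> kspace 1" and v1: "v \<in> kspace 1" using u v U_sub(1)[of x] V_sub(1)[of x] by auto
    have u0: "u 0 \<noteq> 0" using kspace_1_eq_vzero[OF u1] u by blast
    have "v = vadd (vsmult (v 0 / u 0) u) vzero" using kspace_1_multiple[OF v1 u1 u0] by simp
    also have "\<dots> \<in> U x" using U_sub u by blast
    finally show False using UV v by blast
  qed
qed

lemma mod_twist_simple_mod:
  assumes h: "is_kaut C h" and h_eq: "\<And>y. fst h y = x \<longleftrightarrow> y = x"
  shows "mod_iso C (mod_twist (simple_mod C x) h) (simple_mod C x)"
proof (rule mod_iso_eqI)
  show "mdim (mod_twist (simple_mod C x) h) = mdim (simple_mod C x)"
    by (auto simp: mod_twist_def h_eq fun_eq_iff)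
  fix p q a and v :: "nat \<Rightarrow> 'k" assume a: "a \<in> hom C p q"
  show "mact (mod_twist (simple_mod C x) h) p q a v = mact (simple_mod C x) p q a v"
  proof (cases "p = x \<and> q = x")
    case True
    have kc: "k_category C" using lb by (rule locally_bounded_k_category)
    have lin: "linear_on (hdim C x x) (hdim C x x) (snd h x x)"
      and h_kid: "snd h x x (kid C x) = kid C x"
      using h h_eq[of x] unfolding is_kaut_def by metis+
    have "snd h x x a = snd h x x (vsmult (end_scalar C x a) (kid C x))"
      using end_eq_vsmult_kid a True by simp
    also have "\<dots> = vsmult (end_scalar C x a) (kid C x)"
      using linear_on_vsmult[OF lin] kid_hom[OF kc] h_kid by (simp add: hom_def)
    finally have "end_scalar C x (snd h x x a) = end_scalar C x a"
      by (simp add: end_scalar_vsmult end_scalar_kid)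
    then show ?thesis using True h_eq[of x] by (simp add: mod_twist_def)
  qed (auto simp: mod_twist_def h_eq)
qed

text \<open>The simple module at a fixed point of g is isomorphic to its own twist.\<close>

lemma acts_freely_fixed_point_imp_aut_id:
  assumes Gs: "Gs \<subseteq> {g. is_kaut C g}" and grp: "group (aut_group C Gs)"
    and free: "acts_freely_ind C Gs" and g: "g \<in> Gs" and gx: "fst g x = x"
  shows "g = aut_id"
proof (rule ccontr)
  assume "g \<noteq> aut_id"
  then have not_iso: "\<not> mod_iso C (gtwist C Gs g (simple_mod C x)) (simple_mod C x)"
    using free[unfolded acts_freely_ind_def, rule_format, OF is_module_simple_mod
        finite_supp_simple_mod indecomposable_simple_mod g] by blast
  let ?h = "inv\<^bsub>aut_group C Gs\<^esub> g"
  have "?h \<in> Gs" using group.inv_closed[OF grp] g by simp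
  moreover have "fst ?h y = x \<longleftrightarrow> y = x" for y
    using fst_aut_group_inv[OF grp g, of y] fst_aut_group_inv[OF grp g, of x] gx by auto
  ultimately have "mod_iso C (mod_twist (simple_mod C x) ?h) (simple_mod C x)"
    using mod_twist_simple_mod Gs by blast
  then show False using not_iso by (simp add: gtwist_def)
qed

end

context
  fixes C :: "('o, 'k::field) kcat" and Gs :: "('o, 'k) kaut set" and M :: "('o, 'k) kmod"
  assumes Gs: "Gs \<subseteq> {g. is_kaut C g}" and grp: "group (aut_group C Gs)" and M: "is_module C M"
begin

interpretation G: group "aut_group C Gs" by (rule grp)

lemma mod_twist_stab_iso:
  assumes g: "g \<in> stab C Gs M"
  shows "mod_iso C (mod_twist M g) M"
proof -
  have gG: "g \<in> Gs" using g by (simp add: stab_def)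
  have "mod_iso C (mod_twist M (aut_comp C (inv\<^bsub>aut_group C Gs\<^esub> g) g))
      (mod_twist (mod_twist M (inv\<^bsub>aut_group C Gs\<^esub> g)) g)"
    by (rule mod_twist_aut_comp)
  moreover have "mod_iso C (mod_twist (mod_twist M (inv\<^bsub>aut_group C Gs\<^esub> g)) g) (mod_twist M g)"
    using g Gs gG by (intro mod_iso_mod_twist) (auto simp: stab_def gtwist_def)
  ultimately have "mod_iso C M (mod_twist M g)"
    using G.l_inv[of g] gG by (auto intro: mod_iso_trans)
  then show ?thesis by (rule mod_iso_sym[OF M])
qed

lemma stab_subgroup: "subgroup (stab C Gs M) (aut_group C Gs)"
proof (rule G.subgroupI)
  show "stab C Gs M \<subseteq> carrier (aut_group C Gs)" by (auto simp: stab_def)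
  have "mod_iso C M M" by (rule mod_iso_eqI) simp_all
  then have "aut_id \<in> stab C Gs M" using G.one_closed G.inv_one by (simp add: stab_def gtwist_def)
  then show "stab C Gs M \<noteq> {}" by blast
next
  fix g assume g: "g \<in> stab C Gs M"
  then have "g \<in> Gs" by (simp add: stab_def)
  then show "inv\<^bsub>aut_group C Gs\<^esub> g \<in> stab C Gs M"
    using mod_twist_stab_iso[OF g] G.inv_closed[of g] G.inv_inv[of g] by (simp add: stab_def gtwist_def)
next
  fix g h assume g: "g \<in> stab C Gs M" and h: "h \<in> stab C Gs M"
  let ?i = "\<lambda>g. inv\<^bsub>aut_group C Gs\<^esub> g"
  have gG: "g \<in> Gs" and hG: "h \<in> Gs" using g h by (simp_all add: stab_def)
  have "mod_iso C (mod_twist M (aut_comp C (?i h) (?i g))) (mod_twist (mod_twist M (?i h)) (?i g))"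
    by (rule mod_twist_aut_comp)
  also have "mod_iso C (mod_twist (mod_twist M (?i h)) (?i g)) (mod_twist M (?i g))"
    using h Gs G.inv_closed[of g] gG by (intro mod_iso_mod_twist) (auto simp: stab_def gtwist_def)
  also have "mod_iso C (mod_twist M (?i g)) M" using g by (simp add: stab_def gtwist_def)
  finally show "g \<otimes>\<^bsub>aut_group C Gs\<^esub> h \<in> stab C Gs M"
    using G.inv_mult_group[of g h] G.m_closed[of g h] gG hG by (simp add: stab_def gtwist_def)
qed

lemma stab_image_supp:
  assumes g: "g \<in> stab C Gs M"
  shows "fst g ` supp M = supp M"
proof -
  have "bij (fst g)" using g Gs by (auto simp: stab_def is_kaut_def)
  moreover have "fst g -` supp M = supp M"
    using mod_iso_supp[OF mod_twist_stab_iso[OF g]] by (simp add: supp_mod_twist)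
  ultimately show ?thesis by (metis bij_is_surj surj_image_vimage_eq)
qed

end

section \<open>Automorphisms of infinite linear quivers\<close>

lemma lin_index_interval: "lin_index I \<Longrightarrow> a \<in> I \<Longrightarrow> c \<in> I \<Longrightarrow> a \<le> b \<Longrightarrow> b \<le> c \<Longrightarrow> b \<in> I"
  by (auto simp: lin_index_def)

lemma lpath_refl [simp]: "lpath ori i i"
  by (auto simp: lpath_def)

lemma lpath_succ: "lpath ori i (i + 1) \<longleftrightarrow> ori i"
  by (auto simp: lpath_def)

lemma lpath_succ_back: "lpath ori (i + 1) i \<longleftrightarrow> \<not> ori i"
  by (auto simp: lpath_def)

lemma lpath_split:
  "lpath ori i j \<Longrightarrow> min i j \<le> k \<Longrightarrow> k \<le> max i j \<Longrightarrow> lpath ori i k \<and> lpath ori k j"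
  by (auto simp: lpath_def)

lemma lpath_between:
  assumes "lpath ori i k" "lpath ori k j"
  shows "min i j \<le> k \<and> k \<le> max i j"
proof (rule ccontr)
  assume "\<not> ?thesis"
  then consider "k < min i j" | "max i j < k" by linarith
  then show False
  proof cases
    case 1
    then show False using assms by (auto simp: lpath_def dest!: spec[of _ k])
  next
    case 2
    then show False using assms by (auto simp: lpath_def dest!: spec[of _ "k - 1"])
  qed
qed

text \<open>The arrows of the linear quiver on I, recovered from lpath as the covering relation of
  the path order; this is what makes them invariant under lpath-preserving bijections.\<close>

definition lcover :: "(int \<Rightarrow> bool) \<Rightarrow> int set \<Rightarrow> int \<Rightarrow> int \<Rightarrow> bool" where
  "lcover ori I i j \<longleftrightarrow> i \<noteq> j \<and> lpath ori i j \<and>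
     (\<forall>k\<in>I. lpath ori i k \<longrightarrow> lpath ori k j \<longrightarrow> k = i \<or> k = j)"

lemma lcover_imp_adjacent:
  assumes I: "lin_index I" and i: "i \<in> I" and j: "j \<in> I" and cov: "lcover ori I i j"
  shows "\<bar>i - j\<bar> = 1"
proof (rule ccontr)
  assume far: "\<bar>i - j\<bar> \<noteq> 1"
  have "i \<noteq> j" using cov by (simp add: lcover_def)
  define k where "k = (if i < j then i + 1 else i - 1)"
  have k: "min i j \<le> k" "k \<le> max i j" "k \<noteq> i" "k \<noteq> j"
    using far \<open>i \<noteq> j\<close> by (cases "i < j"; simp add: k_def abs_if)+
  have "k \<in> I" using lin_index_interval[OF I, of "min i j" "max i j" k] i j k by (simp add: min_def max_def)
  moreover have "lpath ori i k \<and> lpath ori k j" using lpath_split[of ori i j k] cov k(1,2) by (simp add: lcover_def)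
  ultimately show False using cov k unfolding lcover_def by blast
qed

lemma adjacent_imp_lcover:
  assumes "\<bar>i - j\<bar> = 1"
  shows "lcover ori I i j \<or> lcover ori I j i"
proof -
  have between: "k = i \<or> k = j" if "min i j \<le> k \<and> k \<le> max i j" for k
    using assms that by linarith
  have "i \<noteq> j" using assms by auto
  moreover have "j = i + 1 \<or> i = j + 1" using assms by linarith
  then have "lpath ori i j \<or> lpath ori j i" by (elim disjE) (simp_all add: lpath_succ lpath_succ_back)
  ultimately show ?thesis
    unfolding lcover_def using between lpath_between by (metis max.commute min.commute)
qed

lemma lcover_bij_iff:
  assumes bij: "bij_betw \<sigma> I I" and pres: "\<forall>i\<in>I. \<forall>j\<in>I. lpath ori (\<sigma> i) (\<sigma> j) = lpath ori i j"
    and i: "i \<in> I" and j: "j \<in> I"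
  shows "lcover ori I (\<sigma> i) (\<sigma> j) \<longleftrightarrow> lcover ori I i j"
proof -
  have all_I: "(\<forall>k\<in>I. Q k) \<longleftrightarrow> (\<forall>k\<in>I. Q (\<sigma> k))" for Q
  proof -
    have "(\<forall>k\<in>I. Q k) \<longleftrightarrow> (\<forall>k\<in>\<sigma> ` I. Q k)" using bij by (simp add: bij_betw_def)
    then show ?thesis by simp
  qed
  have inj: "\<And>k l. k \<in> I \<Longrightarrow> l \<in> I \<Longrightarrow> \<sigma> k = \<sigma> l \<longleftrightarrow> k = l"
    using inj_on_eq_iff[OF bij_betw_imp_inj_on[OF bij]] by blast
  show ?thesis
    unfolding lcover_def all_I[of "\<lambda>k. lpath ori (\<sigma> i) k \<longrightarrow> lpath ori k (\<sigma> j) \<longrightarrow> k = \<sigma> i \<or> k = \<sigma> j"]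
    using pres i j by (simp add: inj)
qed

lemma lpath_preserving_unit_step:
  assumes I: "lin_index I" and bij: "bij_betw \<sigma> I I"
    and pres: "\<forall>i\<in>I. \<forall>j\<in>I. lpath ori (\<sigma> i) (\<sigma> j) = lpath ori i j"
    and i: "i \<in> I" "i + 1 \<in> I"
  shows "\<bar>\<sigma> (i + 1) - \<sigma> i\<bar> = 1"
proof -
  have "lcover ori I i (i + 1) \<or> lcover ori I (i + 1) i" by (rule adjacent_imp_lcover) simp
  then have "lcover ori I (\<sigma> i) (\<sigma> (i + 1)) \<or> lcover ori I (\<sigma> (i + 1)) (\<sigma> i)"
    using lcover_bij_iff[OF bij pres] i by blast
  moreover have "\<sigma> i \<in> I" "\<sigma> (i + 1) \<in> I" using bij i by (auto dest: bij_betwE)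
  ultimately show ?thesis using lcover_imp_adjacent[OF I] by (metis abs_minus_commute)
qed

lemma unit_steps_affine_nonneg:
  fixes \<sigma> :: "int \<Rightarrow> int"
  assumes inj: "inj_on \<sigma> {0..}" and unit: "\<And>i. 0 \<le> i \<Longrightarrow> \<bar>\<sigma> (i + 1) - \<sigma> i\<bar> = 1"
    and i: "0 \<le> i"
  shows "\<sigma> i = \<sigma> 0 + (\<sigma> 1 - \<sigma> 0) * i"
proof -
  define e where "e = \<sigma> 1 - \<sigma> 0"
  have e: "e = 1 \<or> e = -1" using unit[of 0] by (auto simp: e_def)
  have "\<sigma> i = \<sigma> 0 + e * i \<and> \<sigma> (i + 1) = \<sigma> 0 + e * (i + 1)"
    using i
  proof (induction i rule: int_ge_induct)
    case base
    then show ?case by (simp add: e_def)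
  next
    case (step i)
    have "\<sigma> (i + 1 + 1) \<noteq> \<sigma> i" using inj_onD[OF inj, of "i + 1 + 1" i] step.hyps by auto
    moreover have "\<bar>\<sigma> (i + 1 + 1) - \<sigma> (i + 1)\<bar> = 1" using unit[of "i + 1"] step.hyps by simp
    ultimately show ?case using step.IH e by (auto simp: algebra_simps)
  qed
  then show ?thesis by (simp add: e_def)
qed

text \<open>On the negative half-line apply the previous lemma to k \<mapsto> \<sigma> (- k); injectivity at
  0 forces the two slopes to agree.\<close>

lemma unit_steps_affine:
  fixes \<sigma> :: "int \<Rightarrow> int"
  assumes I: "I = {0..} \<or> I = UNIV" and inj: "inj_on \<sigma> I"
    and unit: "\<And>i. i \<in> I \<Longrightarrow> i + 1 \<in> I \<Longrightarrow> \<bar>\<sigma> (i + 1) - \<sigma> i\<bar> = 1"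
  shows "(\<sigma> 1 - \<sigma> 0 = 1 \<or> \<sigma> 1 - \<sigma> 0 = -1) \<and> (\<forall>i\<in>I. \<sigma> i = \<sigma> 0 + (\<sigma> 1 - \<sigma> 0) * i)"
proof -
  have nonneg: "\<sigma> i = \<sigma> 0 + (\<sigma> 1 - \<sigma> 0) * i" if "0 \<le> i" for i
    using unit_steps_affine_nonneg[OF inj_on_subset[OF inj] _ that] I unit by auto
  have neg: "\<sigma> i = \<sigma> 0 + (\<sigma> 1 - \<sigma> 0) * i" if U: "I = UNIV" and "i < 0" for i
  proof -
    have inj_U: "inj \<sigma>" using inj U by simp
    have "inj_on (\<lambda>k. \<sigma> (- k)) {0..}" by (simp add: inj_on_def inj_eq[OF inj_U])
    moreover have "\<bar>\<sigma> (- (k + 1)) - \<sigma> (- k)\<bar> = 1" for k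
      using unit[of "- k - 1"] U by (simp add: abs_minus_commute)
    ultimately have aff: "\<sigma> (- k) = \<sigma> 0 + (\<sigma> (- 1) - \<sigma> 0) * k" if "0 \<le> k" for k
      using unit_steps_affine_nonneg[of "\<lambda>k. \<sigma> (- k)", OF _ _ that] by simp
    have slope: "\<sigma> (- 1) - \<sigma> 0 = - (\<sigma> 1 - \<sigma> 0)"
    proof -
      have "\<sigma> (- 1) \<noteq> \<sigma> 1" using inj_eq[OF inj_U, of "- 1" 1] by simp
      moreover have "\<bar>\<sigma> 1 - \<sigma> 0\<bar> = 1" "\<bar>\<sigma> 0 - \<sigma> (- 1)\<bar> = 1"
        using unit[of 0] unit[of "- 1"] U by simp_all
      ultimately show ?thesis by (simp add: abs_if split: if_splits)
    qed
    have "\<sigma> (- (- i)) = \<sigma> 0 + (\<sigma> (- 1) - \<sigma> 0) * (- i)" by (rule aff) (use \<open>i < 0\<close> in simp)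
    then have "\<sigma> i = \<sigma> 0 + (- (\<sigma> 1 - \<sigma> 0)) * (- i)" by (simp only: slope minus_minus)
    then show ?thesis by (simp only: minus_mult_minus)
  qed
  have "\<bar>\<sigma> 1 - \<sigma> 0\<bar> = 1" using unit[of 0] I by auto
  then have "\<sigma> 1 - \<sigma> 0 = 1 \<or> \<sigma> 1 - \<sigma> 0 = -1" by (simp add: abs_if split: if_splits)
  moreover have "\<sigma> i = \<sigma> 0 + (\<sigma> 1 - \<sigma> 0) * i" if "i \<in> I" for i
  proof (cases "0 \<le> i")
    case False
    then show ?thesis using I that by (intro neg) auto
  qed (rule nonneg)
  ultimately show ?thesis by blast
qed

lemma lpath_preserving_bij_fixed_point_or_shift:
  fixes \<sigma> :: "int \<Rightarrow> int"
  assumes I: "I = {0..} \<or> I = UNIV" and bij: "bij_betw \<sigma> I I"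
    and pres: "\<forall>i\<in>I. \<forall>j\<in>I. lpath ori (\<sigma> i) (\<sigma> j) = lpath ori i j"
  shows "(\<exists>i\<in>I. \<sigma> i = i) \<or> (I = UNIV \<and> (\<forall>i. \<sigma> i = i + \<sigma> 0))"
proof -
  have "lin_index I" using I by (auto simp: lin_index_def)
  then have "\<bar>\<sigma> (i + 1) - \<sigma> i\<bar> = 1" if "i \<in> I" "i + 1 \<in> I" for i
    using lpath_preserving_unit_step bij pres that by blast
  then obtain e where e: "e = 1 \<or> e = -1" and aff: "\<And>i. i \<in> I \<Longrightarrow> \<sigma> i = \<sigma> 0 + e * i"
    using unit_steps_affine[OF I bij_betw_imp_inj_on[OF bij]] by blast
  have \<sigma>_I: "\<sigma> i \<in> I" if "i \<in> I" for i using bij that by (meson bij_betwE)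
  consider (half_line) "I = {0..}" | (line) "I = UNIV" using I by blast
  then show ?thesis
  proof cases
    case half_line
    show ?thesis
    proof (cases "e = 1")
      case True
      have "0 \<in> \<sigma> ` I" using bij half_line by (simp add: bij_betw_def)
      then obtain j where "j \<in> I" "\<sigma> j = 0" by auto
      then have "\<sigma> 0 = 0" using aff[of j] \<sigma>_I[of 0] True half_line by simp
      then show ?thesis using half_line by (intro disjI1 bexI[of _ 0]) simp_all
    next
      case False
      have "\<sigma> 0 + 1 \<in> I" using \<sigma>_I[of 0] half_line by simp
      moreover have "\<sigma> (\<sigma> 0 + 1) = -1" using aff[OF calculation] e False by simp
      ultimately show ?thesis using \<sigma>_I[of "\<sigma> 0 + 1"] half_line by simp
    qed
  next
    case line
    show ?thesis
    proof (cases "e = 1")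
      case True
      then have "\<sigma> i = i + \<sigma> 0" for i using aff[of i] line by simp
      then show ?thesis using line by blast
    next
      case False
      then have mirror: "\<sigma> i = \<sigma> 0 - i" for i using aff[of i] e line by simp
      show ?thesis
      proof (cases "even (\<sigma> 0)")
        case True
        then obtain m where "\<sigma> 0 = 2 * m" by (rule evenE)
        then have "\<sigma> m = m" using mirror[of m] by simp
        then show ?thesis using line by blast
      next
        case False
        then obtain m where "\<sigma> 0 = 2 * m + 1" by (rule oddE)
        then have "\<sigma> m = m + 1" "\<sigma> (m + 1) = m" using mirror[of m] mirror[of "m + 1"] by simp_all
        then have "lpath ori (m + 1) m = lpath ori m (m + 1)" using pres line by (metis UNIV_I)
        then show ?thesis by (simp add: lpath_succ lpath_succ_back)
      qed
    qed
  qed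
qed

section \<open>Subgroups of the integers\<close>

lemma subgroup_integer_group_eq_multiples:
  assumes S: "subgroup S integer_group" and nontriv: "S \<noteq> {0}"
  obtains d where "0 < d" "S = range (\<lambda>z. z * d)"
proof -
  interpret Z: group integer_group by simp
  have add: "a + b \<in> S" if "a \<in> S" "b \<in> S" for a b
    using subgroup.m_closed[OF S that] by simp
  have mult: "z * a \<in> S" if "a \<in> S" for a z
    using Z.subgroup_int_pow_closed[OF S that, of z] by simp
  have "0 \<in> S" using subgroup.one_closed[OF S] by simp
  then obtain s where s: "s \<in> S" "s \<noteq> 0" using nontriv by blast
  have "\<bar>s\<bar> \<in> S" using mult[OF s(1), of "-1"] s(1) by (cases "0 \<le> s") simp_all
  then have ex: "\<exists>n::nat. 0 < n \<and> int n \<in> S" using s(2) by (intro exI[of _ "nat \<bar>s\<bar>"]) simp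
  define d where "d = int (LEAST n. 0 < n \<and> int n \<in> S)"
  have d: "0 < d" "d \<in> S" using LeastI_ex[OF ex] by (simp_all add: d_def)
  have least: "d \<le> int m" if "0 < m" "int m \<in> S" for m
    using Least_le[of "\<lambda>n. 0 < n \<and> int n \<in> S" m] that by (simp add: d_def)
  have mod_0: "s mod d = 0" if s: "s \<in> S" for s
  proof (rule ccontr)
    have eq: "s mod d = s + (- (s div d)) * d" by (simp add: minus_div_mult_eq_mod [symmetric])
    have "s mod d \<in> S" unfolding eq by (rule add[OF s mult[OF d(2)]])
    moreover assume "s mod d \<noteq> 0"
    moreover have "0 \<le> s mod d" "s mod d < d" using d(1) by simp_all
    ultimately show False using least[of "nat (s mod d)"] by simp
  qed
  have "S \<subseteq> range (\<lambda>z. z * d)"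
  proof
    fix s assume "s \<in> S"
    then have "s = s div d * d" using div_mult_mod_eq[of s d] mod_0 by simp
    then show "s \<in> range (\<lambda>z. z * d)" by (rule range_eqI)
  qed
  moreover have "range (\<lambda>z. z * d) \<subseteq> S" using mult[OF d(2)] by auto
  ultimately show thesis using that d(1) by blast
qed

lemma integer_group_isoI:
  assumes G: "group G" and h: "h \<in> Group.hom G integer_group"
    and inj: "inj_on h (carrier G)" and nontriv: "carrier G \<noteq> {\<one>\<^bsub>G\<^esub>}"
  shows "G \<cong> integer_group"
proof -
  interpret h: group_hom G integer_group h
    using G h by (simp add: group_hom_def group_hom_axioms_def)
  have h_eq_0: "h g = 0 \<longleftrightarrow> g = \<one>\<^bsub>G\<^esub>" if "g \<in> carrier G" for g
    using inj_on_eq_iff[OF inj that h.G.one_closed] by simp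
  obtain g where "g \<in> carrier G" "g \<noteq> \<one>\<^bsub>G\<^esub>" using nontriv h.G.one_closed by blast
  then have "h ` carrier G \<noteq> {0}" using h_eq_0 by blast
  then obtain d where d: "0 < d" and img: "h ` carrier G = range (\<lambda>z. z * d)"
    using subgroup_integer_group_eq_multiples[OF h.img_is_subgroup] by blast
  have dvd: "d dvd h g" if "g \<in> carrier G" for g
  proof -
    have "h g \<in> range (\<lambda>z. z * d)" using img that by blast
    then show ?thesis by auto
  qed
  let ?\<psi> = "\<lambda>g. h g div d"
  have "?\<psi> \<in> Group.hom G integer_group"
    by (rule homI) (simp_all add: dvd div_plus_div_distrib_dvd_left)
  then interpret \<psi>: group_hom G integer_group ?\<psi>
    using G by (simp add: group_hom_def group_hom_axioms_def)
  have "?\<psi> \<in> iso G integer_group"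
    unfolding \<psi>.iso_iff
  proof (intro conjI ballI impI subsetI)
    fix z :: int
    have "z * d \<in> h ` carrier G" using img by blast
    then obtain g where "g \<in> carrier G" "h g = z * d" by auto
    moreover have "z * d div d = z" using d by simp
    ultimately show "z \<in> ?\<psi> ` carrier G" by (metis image_eqI)
  next
    fix g assume g: "g \<in> carrier G" and "?\<psi> g = \<one>\<^bsub>integer_group\<^esub>"
    then have "h g = 0" using dvd_div_mult_self[OF dvd[OF g]] by simp
    then show "g = \<one>\<^bsub>G\<^esub>" using h_eq_0 g by blast
  qed
  then show ?thesis by (rule is_isoI)
qed

lemma kaut_hdim_eq_0_iff: "is_kaut C g \<Longrightarrow> hdim C (fst g x) (fst g y) = 0 \<longleftrightarrow> hdim C x y = 0"
  unfolding is_kaut_def hom_def by (metis bij_betw_kspace_0_iff)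

lemma lin_index_infinite: "lin_index I \<Longrightarrow> infinite I \<Longrightarrow> I = {0..} \<or> I = UNIV"
  by (auto simp: lin_index_def)

lemma weakly_G_periodic_stab_nontrivial:
  assumes "weakly_G_periodic C Gs Y"
  shows "stab C Gs Y \<noteq> {aut_id}"
proof
  assume "stab C Gs Y = {aut_id}"
  then have "(\<lambda>x. (\<lambda>g. fst g x) ` stab C Gs Y) ` supp Y = (\<lambda>x. {x}) ` supp Y" by auto
  then have "finite ((\<lambda>x. {x}) ` supp Y)" using assms unfolding weakly_G_periodic_def by simp
  then have "finite (supp Y)" by (rule finite_imageD) (simp add: inj_on_def)
  then show False using assms unfolding weakly_G_periodic_def by simp
qed

text \<open>Only the support of B enters the argument, so it is stated for any module supported
  on an infinite line.\<close>

locale line_supported =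
  fixes C :: "('o, 'k::field) kcat" and Gs :: "('o, 'k) kaut set" and B :: "('o, 'k) kmod"
    and I :: "int set" and ori :: "int \<Rightarrow> bool" and \<phi> :: "int \<Rightarrow> 'o"
  assumes lb: "locally_bounded C" and Gs_kaut: "Gs \<subseteq> {g. is_kaut C g}"
    and grp: "group (aut_group C Gs)" and free: "acts_freely_ind C Gs"
    and B_module: "is_module C B"
    and chart: "bij_betw \<phi> I (supp B)" and index: "I = {0..} \<or> I = UNIV"
    and hdim_chart: "\<forall>i\<in>I. \<forall>j\<in>I. hdim C (\<phi> i) (\<phi> j) = (if lpath ori i j then 1 else 0)"
begin

abbreviation H :: "('o, 'k) kaut set" where
  "H \<equiv> stab C Gs B"

lemma H_subgroup: "subgroup H (aut_group C Gs)"
  by (rule stab_subgroup[OF Gs_kaut grp B_module])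

lemma H_kaut: "g \<in> H \<Longrightarrow> is_kaut C g"
  using Gs_kaut by (auto simp: stab_def)

definition index_perm :: "('o, 'k) kaut \<Rightarrow> int \<Rightarrow> int" where
  "index_perm g i = inv_into I \<phi> (fst g (\<phi> i))"

lemma index_perm_chart:
  assumes g: "g \<in> H" and i: "i \<in> I"
  shows "index_perm g i \<in> I" "\<phi> (index_perm g i) = fst g (\<phi> i)"
proof -
  have "fst g (\<phi> i) \<in> supp B"
    using stab_image_supp[OF Gs_kaut grp B_module g] chart i by (auto dest: bij_betwE)
  then show "index_perm g i \<in> I" "\<phi> (index_perm g i) = fst g (\<phi> i)"
    using chart by (auto simp: index_perm_def bij_betw_def inv_into_into f_inv_into_f)
qed

lemma bij_betw_index_perm:
  assumes g: "g \<in> H"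
  shows "bij_betw (index_perm g) I I"
proof -
  have "bij_betw (fst g) (supp B) (supp B)"
    using bij_betw_subset[of "fst g" UNIV UNIV "supp B" "supp B"] H_kaut[OF g]
      stab_image_supp[OF Gs_kaut grp B_module g] by (simp add: is_kaut_def)
  then have "bij_betw (inv_into I \<phi> \<circ> fst g \<circ> \<phi>) I I"
    using chart bij_betw_inv_into by (blast intro: bij_betw_trans)
  moreover have "index_perm g = inv_into I \<phi> \<circ> fst g \<circ> \<phi>" by (simp add: index_perm_def fun_eq_iff)
  ultimately show ?thesis by simp
qed

lemma index_perm_lpath:
  assumes g: "g \<in> H" and i: "i \<in> I" and j: "j \<in> I"
  shows "lpath ori (index_perm g i) (index_perm g j) \<longleftrightarrow> lpath ori i j"
proof -
  have "hdim C (\<phi> (index_perm g i)) (\<phi> (index_perm g j)) = 0 \<longleftrightarrow> hdim C (\<phi> i) (\<phi> j) = 0"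
    using kaut_hdim_eq_0_iff[OF H_kaut[OF g]] by (simp add: index_perm_chart(2)[OF g] i j)
  moreover have "hdim C (\<phi> (index_perm g i)) (\<phi> (index_perm g j)) =
      (if lpath ori (index_perm g i) (index_perm g j) then 1 else 0)"
    using hdim_chart index_perm_chart(1)[OF g] i j by blast
  moreover have "hdim C (\<phi> i) (\<phi> j) = (if lpath ori i j then 1 else 0)" using hdim_chart i j by blast
  ultimately show ?thesis by (simp split: if_splits)
qed

lemma index_perm_aut_id: "i \<in> I \<Longrightarrow> index_perm aut_id i = i"
  using chart by (simp add: index_perm_def bij_betw_def)

lemma index_perm_fixed_point_imp_aut_id:
  assumes g: "g \<in> H" and i: "i \<in> I" and fixed: "index_perm g i = i"
  shows "g = aut_id"
proof (rule acts_freely_fixed_point_imp_aut_id[OF lb _ Gs_kaut grp free])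
  show "hdim C (\<phi> i) (\<phi> i) = 1" using hdim_chart i by simp
  show "g \<in> Gs" using g by (simp add: stab_def)
  show "fst g (\<phi> i) = \<phi> i" using index_perm_chart(2)[OF g i] fixed by simp
qed

lemma H_aut_id_or_shift:
  assumes g: "g \<in> H"
  shows "g = aut_id \<or> (I = UNIV \<and> (\<forall>i. index_perm g i = i + index_perm g 0))"
  using lpath_preserving_bij_fixed_point_or_shift[OF index bij_betw_index_perm[OF g]]
    index_perm_lpath[OF g] index_perm_fixed_point_imp_aut_id[OF g] by blast

lemma index_perm_aut_comp:
  assumes g: "g \<in> H" and h: "h \<in> H" and i: "i \<in> I"
  shows "index_perm (aut_comp C g h) i = index_perm g (index_perm h i)"
  using index_perm_chart(2)[OF h i] by (simp add: index_perm_def)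

lemma index_perm_shift_hom:
  assumes line: "I = UNIV"
  shows "(\<lambda>g. index_perm g 0) \<in> Group.hom ((aut_group C Gs)\<lparr>carrier := H\<rparr>) integer_group"
proof (rule homI)
  fix g h assume "g \<in> carrier ((aut_group C Gs)\<lparr>carrier := H\<rparr>)" "h \<in> carrier ((aut_group C Gs)\<lparr>carrier := H\<rparr>)"
  then have g: "g \<in> H" and h: "h \<in> H" by simp_all
  have "index_perm g (index_perm h 0) = index_perm h 0 + index_perm g 0"
    using H_aut_id_or_shift[OF g] index_perm_aut_id line by auto
  then have "index_perm (aut_comp C g h) 0 = index_perm h 0 + index_perm g 0"
    using index_perm_aut_comp[OF g h, of 0] line by simp
  then show "index_perm (g \<otimes>\<^bsub>(aut_group C Gs)\<lparr>carrier := H\<rparr>\<^esub> h) 0 =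
      index_perm g 0 \<otimes>\<^bsub>integer_group\<^esub> index_perm h 0" by simp
qed simp

lemma H_group: "group ((aut_group C Gs)\<lparr>carrier := H\<rparr>)"
  by (rule subgroup.subgroup_is_group[OF H_subgroup grp])

lemma index_perm_shift_inj:
  assumes line: "I = UNIV"
  shows "inj_on (\<lambda>g. index_perm g 0) H"
  using inj_on_one_iff'[OF index_perm_shift_hom[OF line] H_group] index_perm_fixed_point_imp_aut_id line
  by simp

lemma H_iso_integer_group:
  assumes nontriv: "H \<noteq> {aut_id}"
  shows "(aut_group C Gs)\<lparr>carrier := H\<rparr> \<cong> integer_group"
proof -
  have "aut_id \<in> H" using subgroup.one_closed[OF H_subgroup] by simp
  then have line: "I = UNIV" using nontriv H_aut_id_or_shift by blast
  show ?thesis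
    using integer_group_isoI[OF H_group index_perm_shift_hom[OF line]] index_perm_shift_inj[OF line] nontriv
    by simp
qed

end

theorem lemma3p3:
  fixes C :: "('o, 'k::alg_closed_field) kcat"
    and Gs :: "('o, 'k) kaut set"
    and L :: "'o set"
    and B :: "('o, 'k) kmod"
  assumes "locally_bounded C"
    and "connected_kcat C"
    and "Gs \<subseteq> {g. is_kaut C g}"
    and "group (aut_group C Gs)"
    and "acts_freely_ind C Gs"
    and "is_line C L"
    and "is_BL C L B"
    and "weakly_G_periodic C Gs B"
  shows "(aut_group C Gs)\<lparr>carrier := stab C Gs B\<rparr> \<cong> integer_group"
proof -
  have B: "is_module C B" "supp B = L" using assms(7) by (auto simp: is_BL_def supp_def)
  obtain I ori \<phi> where I: "lin_index I" and chart: "bij_betw (\<phi> :: int \<Rightarrow> 'o) I L"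
    and hdim: "\<forall>i\<in>I. \<forall>j\<in>I. hdim C (\<phi> i) (\<phi> j) = (if lpath ori i j then 1 else 0)"
    using assms(6) unfolding is_line_def by blast
  have "infinite I" using chart assms(8) B(2) by (simp add: weakly_G_periodic_def bij_betw_finite)
  then interpret line_supported C Gs B I ori \<phi>
    using assms(1,3-5) B chart hdim lin_index_infinite[OF I] by (simp add: line_supported_def)
  show ?thesis by (rule H_iso_integer_group[OF weakly_G_periodic_stab_nontrivial[OF assms(8)]])
qed

end
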